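(* Let $\rho\in(0,+\infty)$ and $\xi\in\mathbb{R}$. On $(r,\phi)\in(0,+\infty)\times\mathbb{S}^1$ with conjugate momenta $(P_r,P_\phi)$ consider $$H_0=\frac{1}{2(1+\rho r^2)}\Big(P_r^2+\frac{P_\phi^2}{r^2}+\xi r^2\Big),$$ associated with the metric $g=(1+\rho r^2)(dr^2+r^2d\phi^2)$, and the quadratic functions $$S_1=\cos(2\phi)\,P_r\frac{P_\phi}{r}+\sin(2\phi)\Big(H_0-\frac{P_\phi^2}{r^2}\Big),\qquad S_2=-\sin(2\phi)\,P_r\frac{P_\phi}{r}+\cos(2\phi)\Big(H_0-\frac{P_\phi^2}{r^2}\Big).$$ Then the superintegrable systems $\{H_0,P_\phi,S_1\}$ and $\{H_0,P_\phi,S_2\}$ (the metric and the functions $H_0,P_\phi,S_1,S_2$) are globally defined on a manifold $M$ diffeomorphic to $\mathbb{R}^2$.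
   Context: $(r,\phi)$ are polar coordinates; the manifold is obtained by adding the origin, i.e. using Cartesian coordinates $x_1=r\cos\phi$, $x_2=r\sin\phi$. *)

theory Defs
  imports "HOL-Analysis.Analysis"
begin

fun Ck_on :: "nat \<Rightarrow> 'a::euclidean_space set \<Rightarrow> ('a \<Rightarrow> real) \<Rightarrow> bool" where
  "Ck_on 0 S f = continuous_on S f"
| "Ck_on (Suc k) S f =
     ((\<forall>x\<in>S. f differentiable (at x)) \<and>
      (\<forall>v. Ck_on k S (\<lambda>x. frechet_derivative f (at x) v)))"

definition smooth_on :: "'a::euclidean_space set \<Rightarrow> ('a \<Rightarrow> real) \<Rightarrow> bool" where
  "smooth_on S f \<longleftrightarrow> (\<forall>k. Ck_on k S f)"

definition H0 :: "real \<Rightarrow> real \<Rightarrow> real \<Rightarrow> real \<Rightarrow> real \<Rightarrow> real \<Rightarrow> real" where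
  "H0 \<rho> \<xi> r \<phi> Pr Pphi =
     (Pr^2 + Pphi^2 / r^2 + \<xi> * r^2) / (2 * (1 + \<rho> * r^2))"

definition Pphi_fun :: "real \<Rightarrow> real \<Rightarrow> real \<Rightarrow> real \<Rightarrow> real" where
  "Pphi_fun r \<phi> Pr Pphi = Pphi"

definition S1 :: "real \<Rightarrow> real \<Rightarrow> real \<Rightarrow> real \<Rightarrow> real \<Rightarrow> real \<Rightarrow> real" where
  "S1 \<rho> \<xi> r \<phi> Pr Pphi =
     cos (2*\<phi>) * Pr * Pphi / r + sin (2*\<phi>) * (H0 \<rho> \<xi> r \<phi> Pr Pphi - Pphi^2 / r^2)"

definition S2 :: "real \<Rightarrow> real \<Rightarrow> real \<Rightarrow> real \<Rightarrow> real \<Rightarrow> real \<Rightarrow> real" where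
  "S2 \<rho> \<xi> r \<phi> Pr Pphi =
     - sin (2*\<phi>) * Pr * Pphi / r + cos (2*\<phi>) * (H0 \<rho> \<xi> r \<phi> Pr Pphi - Pphi^2 / r^2)"

text \<open>Cotangent lift of the polar coordinate map: a point (r,phi,P_r,P_phi) with r > 0
  corresponds to the Cartesian point ((x1,x2),(p1,p2)) with x = (r cos phi, r sin phi)
  and p = P_r (cos phi, sin phi) + (P_phi / r) (- sin phi, cos phi).\<close>
definition polar_to_cart :: "real \<Rightarrow> real \<Rightarrow> real \<Rightarrow> real \<Rightarrow> (real \<times> real) \<times> (real \<times> real)" where
  "polar_to_cart r \<phi> Pr Pphi =
     ((r * cos \<phi>, r * sin \<phi>),
      (Pr * cos \<phi> - Pphi / r * sin \<phi>, Pr * sin \<phi> + Pphi / r * cos \<phi>))"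

definition global_extension ::
  "((real \<times> real) \<times> (real \<times> real) \<Rightarrow> real) \<Rightarrow> (real \<Rightarrow> real \<Rightarrow> real \<Rightarrow> real \<Rightarrow> real) \<Rightarrow> bool" where
  "global_extension F f \<longleftrightarrow> smooth_on UNIV F \<and>
     (\<forall>r \<phi> Pr Pphi. r > 0 \<longrightarrow> F (polar_to_cart r \<phi> Pr Pphi) = f r \<phi> Pr Pphi)"

end

theory Submission
  imports Defs
begin

text \<open>
  In Cartesian canonical coordinates \<open>x = r (cos \<phi>, sin \<phi>)\<close>,
  \<open>p = P\<^sub>r (cos \<phi>, sin \<phi>) + (P\<^sub>\<phi> / r) (- sin \<phi>, cos \<phi>)\<close> one has
  \<open>|x|\<^sup>2 = r\<^sup>2\<close>, \<open>|p|\<^sup>2 = P\<^sub>r\<^sup>2 + P\<^sub>\<phi>\<^sup>2 / r\<^sup>2\<close> and \<open>x\<^sub>1 p\<^sub>2 - x\<^sub>2 p\<^sub>1 = P\<^sub>\<phi>\<close>, while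
  \<open>x\<^sub>1 x\<^sub>2\<close>, \<open>x\<^sub>1\<^sup>2 - x\<^sub>2\<^sup>2\<close>, \<open>p\<^sub>1 p\<^sub>2\<close>, \<open>p\<^sub>1\<^sup>2 - p\<^sub>2\<^sup>2\<close> are the double-angle
  combinations of the polar quantities. Hence the metric is \<open>(1 + \<rho> |x|\<^sup>2)(dx\<^sub>1\<^sup>2 + dx\<^sub>2\<^sup>2)\<close> and
  \<^item> \<open>H\<^sub>0 = (|p|\<^sup>2 + \<xi> |x|\<^sup>2) / (2 (1 + \<rho> |x|\<^sup>2))\<close>,
  \<^item> \<open>S\<^sub>1 = p\<^sub>1 p\<^sub>2 + x\<^sub>1 x\<^sub>2 (\<xi> - \<rho> |p|\<^sup>2) / (1 + \<rho> |x|\<^sup>2)\<close>,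
  \<^item> \<open>S\<^sub>2 = (p\<^sub>1\<^sup>2 - p\<^sub>2\<^sup>2) / 2 + (x\<^sub>1\<^sup>2 - x\<^sub>2\<^sup>2) (\<xi> - \<rho> |p|\<^sup>2) / (2 (1 + \<rho> |x|\<^sup>2))\<close>:
  the terms singular at \<open>r = 0\<close> cancel, leaving rational functions whose only denominator
  \<open>1 + \<rho> |x|\<^sup>2\<close> is positive. Smooth real functions on an open set are closed under ring
  operations, division by non-vanishing functions and composition with linear maps, so all of
  them are smooth on \<open>T*\<real>\<^sup>2\<close>.
\<close>

lemma Ck_on_transform_within_open:
  assumes "Ck_on k S f" "open S" "\<And>x. x \<in> S \<Longrightarrow> f x = g x"
  shows "Ck_on k S g"
  using assms
proof (induction k arbitrary: f g)
  case 0
  then show ?case by (simp cong: continuous_on_cong)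
next
  case (Suc k)
  have "g differentiable (at x)" if "x \<in> S" for x
  proof -
    from Suc.prems(1) that obtain D where "(f has_derivative D) (at x)"
      by (auto simp: differentiable_def)
    with Suc.prems(2,3) that show ?thesis
      by (meson differentiableI has_derivative_transform_within_open)
  qed
  moreover have "frechet_derivative f (at x) = frechet_derivative g (at x)" if "x \<in> S" for x
    using Suc.prems that by (intro frechet_derivative_transform_within_open) auto
  ultimately show ?case
    using Suc.prems Suc.IH[of "\<lambda>x. frechet_derivative f (at x) _"] by simp
qed

lemma Ck_on_const: "Ck_on k S (\<lambda>x. c)"
proof (induction k arbitrary: c)
  case 0
  then show ?case by simp
next
  case (Suc k)
  have "frechet_derivative (\<lambda>x. c) (at x) = (\<lambda>h. 0)" for x :: 'a
    by (simp add: frechet_derivative_at[symmetric])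
  then show ?case
    using Suc by simp
qed

lemma Ck_on_bounded_linear: "bounded_linear f \<Longrightarrow> Ck_on k S f"
proof (induction k)
  case 0
  then show ?case by (simp add: linear_continuous_on)
next
  case (Suc k)
  have "(f has_derivative f) (at x)" for x
    using Suc.prems by (rule bounded_linear_imp_has_derivative)
  then have "f differentiable (at x)" "frechet_derivative f (at x) = f" for x
    by (auto intro: differentiableI simp: frechet_derivative_at[symmetric])
  then show ?case
    by (simp add: Ck_on_const)
qed

lemma Ck_on_Suc_imp_Ck_on: "Ck_on (Suc k) S f \<Longrightarrow> Ck_on k S f"
proof (induction k arbitrary: f)
  case 0
  then show ?case
    by (simp add: continuous_at_imp_continuous_on differentiable_imp_continuous_within)
next
  case (Suc k)
  then show ?case by simp
qed

lemma Ck_on_add: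
  assumes "open S" "Ck_on k S f" "Ck_on k S g"
  shows "Ck_on k S (\<lambda>x. f x + g x)"
  using assms(2,3)
proof (induction k arbitrary: f g)
  case 0
  then show ?case by (simp add: continuous_on_add)
next
  case (Suc k)
  have deriv: "frechet_derivative (\<lambda>x. f x + g x) (at x) =
      (\<lambda>h. frechet_derivative f (at x) h + frechet_derivative g (at x) h)" if "x \<in> S" for x
    using Suc.prems that
    by (intro frechet_derivative_at[symmetric] has_derivative_add)
      (simp_all add: frechet_derivative_works[symmetric])
  have Ck_deriv: "Ck_on k S (\<lambda>x. frechet_derivative f (at x) v + frechet_derivative g (at x) v)" for v
    using Suc by simp
  have "Ck_on k S (\<lambda>x. frechet_derivative (\<lambda>x. f x + g x) (at x) v)" for v
    by (rule Ck_on_transform_within_open[OF Ck_deriv[of v] assms(1)]) (simp add: deriv)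
  with Suc.prems show ?case
    by simp
qed

lemma Ck_on_mult:
  fixes f g :: "'a::euclidean_space \<Rightarrow> real"
  assumes "open S" "Ck_on k S f" "Ck_on k S g"
  shows "Ck_on k S (\<lambda>x. f x * g x)"
  using assms(2,3)
proof (induction k arbitrary: f g)
  case 0
  then show ?case by (simp add: continuous_on_mult)
next
  case (Suc k)
  have deriv: "frechet_derivative (\<lambda>x. f x * g x) (at x) =
      (\<lambda>h. f x * frechet_derivative g (at x) h + frechet_derivative f (at x) h * g x)"
    if "x \<in> S" for x
    using Suc.prems that
    by (intro frechet_derivative_at[symmetric] has_derivative_mult)
      (simp_all add: frechet_derivative_works[symmetric])
  have "Ck_on k S f" "Ck_on k S g"
    using Suc.prems by (auto intro: Ck_on_Suc_imp_Ck_on)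
  with Suc have Ck_deriv:
    "Ck_on k S (\<lambda>x. f x * frechet_derivative g (at x) v + frechet_derivative f (at x) v * g x)" for v
    by (simp add: Ck_on_add assms(1))
  have "Ck_on k S (\<lambda>x. frechet_derivative (\<lambda>x. f x * g x) (at x) v)" for v
    by (rule Ck_on_transform_within_open[OF Ck_deriv[of v] assms(1)]) (simp add: deriv)
  with Suc.prems show ?case
    by simp
qed

lemma Ck_on_minus:
  fixes f :: "'a::euclidean_space \<Rightarrow> real"
  shows "open S \<Longrightarrow> Ck_on k S f \<Longrightarrow> Ck_on k S (\<lambda>x. - f x)"
  using Ck_on_mult[OF _ Ck_on_const[of k S "-1"], of f] by simp

lemma Ck_on_inverse:
  fixes f :: "'a::euclidean_space \<Rightarrow> real"
  assumes "open S" "Ck_on k S f" "\<And>x. x \<in> S \<Longrightarrow> f x \<noteq> 0"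
  shows "Ck_on k S (\<lambda>x. inverse (f x))"
  using assms(2)
proof (induction k)
  case 0
  then show ?case by (simp add: continuous_on_inverse assms(3))
next
  case (Suc k)
  have deriv: "frechet_derivative (\<lambda>x. inverse (f x)) (at x) =
      (\<lambda>h. - (inverse (f x) * frechet_derivative f (at x) h * inverse (f x)))" if "x \<in> S" for x
    using Suc.prems assms(3) that
    by (intro frechet_derivative_at[symmetric] Deriv.has_derivative_inverse)
      (simp_all add: frechet_derivative_works[symmetric])
  have "Ck_on k S (\<lambda>x. inverse (f x))"
    using Suc.IH Suc.prems Ck_on_Suc_imp_Ck_on by blast
  with Suc.prems have Ck_deriv:
    "Ck_on k S (\<lambda>x. - (inverse (f x) * frechet_derivative f (at x) v * inverse (f x)))" for v
    by (simp add: Ck_on_minus Ck_on_mult assms(1))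
  have "Ck_on k S (\<lambda>x. frechet_derivative (\<lambda>x. inverse (f x)) (at x) v)" for v
    by (rule Ck_on_transform_within_open[OF Ck_deriv[of v] assms(1)]) (simp add: deriv)
  with Suc.prems assms(3) show ?case
    by simp
qed

lemma Ck_on_compose_bounded_linear:
  assumes "open S" "bounded_linear L" "L ` S \<subseteq> T" "Ck_on k T f"
  shows "Ck_on k S (\<lambda>x. f (L x))"
  using assms(4)
proof (induction k arbitrary: f)
  case 0
  then show ?case
    using continuous_on_compose2[OF _ linear_continuous_on[OF assms(2)] assms(3)] by simp
next
  case (Suc k)
  have chain: "((\<lambda>x. f (L x)) has_derivative (\<lambda>h. frechet_derivative f (at (L x)) (L h))) (at x)"
    if "x \<in> S" for x
  proof -
    have "(f has_derivative frechet_derivative f (at (L x))) (at (L x))"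
      using Suc.prems assms(3) that by (simp add: frechet_derivative_works[symmetric] image_subset_iff)
    from diff_chain_at[OF bounded_linear_imp_has_derivative[OF assms(2)] this] show ?thesis
      by (simp add: o_def)
  qed
  have Ck_deriv: "Ck_on k S (\<lambda>x. frechet_derivative f (at (L x)) (L v))" for v
    using Suc.IH[of "\<lambda>y. frechet_derivative f (at y) (L v)"] Suc.prems by simp
  have "Ck_on k S (\<lambda>x. frechet_derivative (\<lambda>x. f (L x)) (at x) v)" for v
    by (rule Ck_on_transform_within_open[OF Ck_deriv[of v] assms(1)])
      (simp add: frechet_derivative_at[OF chain, symmetric])
  with chain show ?case
    by (auto intro: differentiableI)
qed

lemma smooth_on_const: "smooth_on S (\<lambda>x. c)"
  by (simp add: smooth_on_def Ck_on_const)

lemma smooth_on_bounded_linear: "bounded_linear f \<Longrightarrow> smooth_on S f"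
  by (simp add: smooth_on_def Ck_on_bounded_linear)

lemma smooth_on_add:
  "open S \<Longrightarrow> smooth_on S f \<Longrightarrow> smooth_on S g \<Longrightarrow> smooth_on S (\<lambda>x. f x + g x)"
  by (simp add: smooth_on_def Ck_on_add)

lemma smooth_on_mult:
  fixes f g :: "'a::euclidean_space \<Rightarrow> real"
  shows "open S \<Longrightarrow> smooth_on S f \<Longrightarrow> smooth_on S g \<Longrightarrow> smooth_on S (\<lambda>x. f x * g x)"
  by (simp add: smooth_on_def Ck_on_mult)

lemma smooth_on_diff:
  fixes f g :: "'a::euclidean_space \<Rightarrow> real"
  shows "open S \<Longrightarrow> smooth_on S f \<Longrightarrow> smooth_on S g \<Longrightarrow> smooth_on S (\<lambda>x. f x - g x)"
  using Ck_on_add[of S _ f "\<lambda>x. - g x"] Ck_on_minus[of S _ g] by (simp add: smooth_on_def)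

lemma smooth_on_divide:
  fixes f g :: "'a::euclidean_space \<Rightarrow> real"
  assumes "open S" "smooth_on S f" "smooth_on S g" "\<And>x. x \<in> S \<Longrightarrow> g x \<noteq> 0"
  shows "smooth_on S (\<lambda>x. f x / g x)"
  using assms by (simp add: smooth_on_def divide_inverse Ck_on_mult Ck_on_inverse)

lemma smooth_on_power:
  fixes f :: "'a::euclidean_space \<Rightarrow> real"
  shows "open S \<Longrightarrow> smooth_on S f \<Longrightarrow> smooth_on S (\<lambda>x. f x ^ n)"
  by (induction n) (simp_all add: smooth_on_const smooth_on_mult)

lemma smooth_on_compose_bounded_linear:
  "open S \<Longrightarrow> bounded_linear L \<Longrightarrow> L ` S \<subseteq> T \<Longrightarrow> smooth_on T f \<Longrightarrow> smooth_on S (\<lambda>x. f (L x))"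
  by (simp add: smooth_on_def Ck_on_compose_bounded_linear)

lemma smooth_on_phase_space_coordinates:
  fixes S :: "((real \<times> real) \<times> (real \<times> real)) set"
  shows "smooth_on S (\<lambda>z. fst (fst z))" "smooth_on S (\<lambda>z. snd (fst z))"
    "smooth_on S (\<lambda>z. fst (snd z))" "smooth_on S (\<lambda>z. snd (snd z))"
  by (intro smooth_on_bounded_linear bounded_linear_compose[OF bounded_linear_fst]
      bounded_linear_compose[OF bounded_linear_snd] bounded_linear_fst bounded_linear_snd)+

lemma rotation_sum_squares:
  "(a * cos \<phi> - b * sin \<phi>)^2 + (a * sin \<phi> + b * cos \<phi>)^2 = a^2 + (b::real)^2"
proof -
  have "(a * cos \<phi> - b * sin \<phi>)^2 + (a * sin \<phi> + b * cos \<phi>)^2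
      = (a^2 + b^2) * ((sin \<phi>)^2 + (cos \<phi>)^2)"
    by algebra
  then show ?thesis by simp
qed

lemma rotation_product:
  "(a * cos \<phi> - b * sin \<phi>) * (a * sin \<phi> + b * cos \<phi>)
     = (a^2 - b^2) * sin (2 * \<phi>) / 2 + a * b * cos (2 * \<phi>::real)"
  unfolding sin_double cos_double by (simp add: field_simps power2_eq_square)

lemma rotation_diff_squares:
  "(a * cos \<phi> - b * sin \<phi>)^2 - (a * sin \<phi> + b * cos \<phi>)^2
     = (a^2 - b^2) * cos (2 * \<phi>) - 2 * a * b * sin (2 * \<phi>::real)"
  unfolding sin_double cos_double by (simp add: algebra_simps power2_eq_square)

lemma rotation_cross_product:
  "(a * cos \<phi> - b * sin \<phi>) * (c * sin \<phi> + d * cos \<phi>)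
     - (a * sin \<phi> + b * cos \<phi>) * (c * cos \<phi> - d * sin \<phi>) = a * d - b * (c::real)"
proof -
  have "(a * cos \<phi> - b * sin \<phi>) * (c * sin \<phi> + d * cos \<phi>)
     - (a * sin \<phi> + b * cos \<phi>) * (c * cos \<phi> - d * sin \<phi>)
      = (a * d - b * c) * ((sin \<phi>)^2 + (cos \<phi>)^2)"
    by algebra
  then show ?thesis by simp
qed

definition conformal_factor :: "real \<Rightarrow> real \<times> real \<Rightarrow> real" where
  "conformal_factor \<rho> = (\<lambda>(x1, x2). 1 + \<rho> * (x1^2 + x2^2))"

lemma conformal_factor_pos: "\<rho> \<ge> 0 \<Longrightarrow> conformal_factor \<rho> x > 0"
  by (simp add: conformal_factor_def split_def add_pos_nonneg)

lemma conformal_factor_nonzero: "\<rho> \<ge> 0 \<Longrightarrow> conformal_factor \<rho> x \<noteq> 0"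
  using conformal_factor_pos by (metis less_irrefl)

lemma smooth_on_conformal_factor: "smooth_on UNIV (conformal_factor \<rho>)"
  unfolding conformal_factor_def split_def
  by (intro smooth_on_add smooth_on_mult smooth_on_power smooth_on_const
      smooth_on_bounded_linear bounded_linear_fst bounded_linear_snd open_UNIV)

lemma smooth_on_conformal_factor_fst:
  "smooth_on UNIV (\<lambda>z::(real \<times> real) \<times> (real \<times> real). conformal_factor \<rho> (fst z))"
  by (rule smooth_on_compose_bounded_linear[OF open_UNIV bounded_linear_fst _ smooth_on_conformal_factor])
    simp

lemma conformal_factor_polar:
  "conformal_factor \<rho> (r * cos \<phi>, r * sin \<phi>) = 1 + \<rho> * r^2"
  using rotation_sum_squares[of r \<phi> 0] by (simp add: conformal_factor_def)

lemma conformal_factor_polar_pullback: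
  "conformal_factor \<rho> (r * cos \<phi>, r * sin \<phi>) * (a * cos \<phi> - r * b * sin \<phi>)^2
     + conformal_factor \<rho> (r * cos \<phi>, r * sin \<phi>) * (a * sin \<phi> + r * b * cos \<phi>)^2
   = (1 + \<rho> * r^2) * (a^2 + r^2 * b^2)"
  using rotation_sum_squares[of a \<phi> "r * b"]
  by (simp add: conformal_factor_polar power_mult_distrib distrib_left[symmetric])

definition H0_cart :: "real \<Rightarrow> real \<Rightarrow> (real \<times> real) \<times> (real \<times> real) \<Rightarrow> real" where
  "H0_cart \<rho> \<xi> = (\<lambda>((x1, x2), (p1, p2)).
     (p1^2 + p2^2 + \<xi> * (x1^2 + x2^2)) / (2 * conformal_factor \<rho> (x1, x2)))"

lemma smooth_on_H0_cart: "\<rho> \<ge> 0 \<Longrightarrow> smooth_on UNIV (H0_cart \<rho> \<xi>)"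
  unfolding H0_cart_def split_def prod.collapse
  by (intro smooth_on_add smooth_on_mult smooth_on_divide smooth_on_power smooth_on_const
      smooth_on_phase_space_coordinates smooth_on_conformal_factor_fst open_UNIV)
    (simp_all add: conformal_factor_nonzero)

lemma H0_cart_polar_to_cart: "H0_cart \<rho> \<xi> (polar_to_cart r \<phi> Pr Pphi) = H0 \<rho> \<xi> r \<phi> Pr Pphi"
  using rotation_sum_squares[of Pr \<phi> "Pphi / r"] rotation_sum_squares[of r \<phi> 0]
  by (simp add: H0_cart_def H0_def polar_to_cart_def conformal_factor_polar power_divide)

lemma global_extension_H0: "\<rho> \<ge> 0 \<Longrightarrow> global_extension (H0_cart \<rho> \<xi>) (H0 \<rho> \<xi>)"
  by (simp add: global_extension_def smooth_on_H0_cart H0_cart_polar_to_cart)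

definition Pphi_cart :: "(real \<times> real) \<times> (real \<times> real) \<Rightarrow> real" where
  "Pphi_cart = (\<lambda>((x1, x2), (p1, p2)). x1 * p2 - x2 * p1)"

lemma global_extension_Pphi: "global_extension Pphi_cart Pphi_fun"
  unfolding global_extension_def
proof (intro conjI allI impI)
  show "smooth_on UNIV Pphi_cart"
    unfolding Pphi_cart_def split_def
    by (intro smooth_on_diff smooth_on_mult smooth_on_phase_space_coordinates open_UNIV)
  show "Pphi_cart (polar_to_cart r \<phi> Pr Pphi) = Pphi_fun r \<phi> Pr Pphi" if "r > 0" for r \<phi> Pr Pphi
    using rotation_cross_product[of r \<phi> 0 Pr "Pphi / r"] that
    by (simp add: Pphi_cart_def Pphi_fun_def polar_to_cart_def)
qed

lemma H0_minus_angular_term: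
  assumes "1 + \<rho> * r^2 \<noteq> 0"
  shows "H0 \<rho> \<xi> r \<phi> Pr Pphi - Pphi^2 / r^2
    = (Pr^2 - (Pphi / r)^2 + r^2 * (\<xi> - \<rho> * (Pr^2 + (Pphi / r)^2)) / (1 + \<rho> * r^2)) / 2"
  using assms by (simp add: H0_def field_simps)

definition S1_cart :: "real \<Rightarrow> real \<Rightarrow> (real \<times> real) \<times> (real \<times> real) \<Rightarrow> real" where
  "S1_cart \<rho> \<xi> = (\<lambda>((x1, x2), (p1, p2)).
     p1 * p2 + x1 * x2 * (\<xi> - \<rho> * (p1^2 + p2^2)) / conformal_factor \<rho> (x1, x2))"

lemma S1_cart_polar_to_cart:
  assumes "\<rho> \<ge> 0"
  shows "S1_cart \<rho> \<xi> (polar_to_cart r \<phi> Pr Pphi) = S1 \<rho> \<xi> r \<phi> Pr Pphi"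
proof -
  let ?q = "Pphi / r" and ?D = "1 + \<rho> * r^2"
  have "?D \<noteq> 0"
    using conformal_factor_nonzero[OF assms, of "(r, 0)"] by (simp add: conformal_factor_def)
  have "S1_cart \<rho> \<xi> (polar_to_cart r \<phi> Pr Pphi)
      = (Pr * cos \<phi> - ?q * sin \<phi>) * (Pr * sin \<phi> + ?q * cos \<phi>)
        + (r * cos \<phi> - 0 * sin \<phi>) * (r * sin \<phi> + 0 * cos \<phi>)
          * (\<xi> - \<rho> * ((Pr * cos \<phi> - ?q * sin \<phi>)^2 + (Pr * sin \<phi> + ?q * cos \<phi>)^2))
          / (1 + \<rho> * ((r * cos \<phi> - 0 * sin \<phi>)^2 + (r * sin \<phi> + 0 * cos \<phi>)^2))"
    by (simp add: S1_cart_def conformal_factor_def polar_to_cart_def)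
  also have "\<dots> = (Pr^2 - ?q^2) * sin (2 * \<phi>) / 2 + Pr * ?q * cos (2 * \<phi>)
        + r^2 * sin (2 * \<phi>) / 2 * (\<xi> - \<rho> * (Pr^2 + ?q^2)) / ?D"
    unfolding rotation_product rotation_sum_squares by simp
  also have "\<dots> = cos (2 * \<phi>) * Pr * ?q
      + sin (2 * \<phi>) * ((Pr^2 - ?q^2 + r^2 * (\<xi> - \<rho> * (Pr^2 + ?q^2)) / ?D) / 2)"
    using \<open>?D \<noteq> 0\<close> by (simp add: field_simps)
  also have "\<dots> = S1 \<rho> \<xi> r \<phi> Pr Pphi"
    unfolding S1_def H0_minus_angular_term[OF \<open>?D \<noteq> 0\<close>] by simp
  finally show ?thesis .
qed

lemma smooth_on_S1_cart: "\<rho> \<ge> 0 \<Longrightarrow> smooth_on UNIV (S1_cart \<rho> \<xi>)"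
  unfolding S1_cart_def split_def prod.collapse
  by (intro smooth_on_add smooth_on_diff smooth_on_mult smooth_on_divide smooth_on_power
      smooth_on_const smooth_on_phase_space_coordinates smooth_on_conformal_factor_fst open_UNIV)
    (simp_all add: conformal_factor_nonzero)

lemma global_extension_S1: "\<rho> \<ge> 0 \<Longrightarrow> global_extension (S1_cart \<rho> \<xi>) (S1 \<rho> \<xi>)"
  by (simp add: global_extension_def smooth_on_S1_cart S1_cart_polar_to_cart)

definition S2_cart :: "real \<Rightarrow> real \<Rightarrow> (real \<times> real) \<times> (real \<times> real) \<Rightarrow> real" where
  "S2_cart \<rho> \<xi> = (\<lambda>((x1, x2), (p1, p2)).
     (p1^2 - p2^2) / 2 + (x1^2 - x2^2) * (\<xi> - \<rho> * (p1^2 + p2^2)) / (2 * conformal_factor \<rho> (x1, x2)))"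

lemma S2_cart_polar_to_cart:
  assumes "\<rho> \<ge> 0"
  shows "S2_cart \<rho> \<xi> (polar_to_cart r \<phi> Pr Pphi) = S2 \<rho> \<xi> r \<phi> Pr Pphi"
proof -
  let ?q = "Pphi / r" and ?D = "1 + \<rho> * r^2"
  have "?D \<noteq> 0"
    using conformal_factor_nonzero[OF assms, of "(r, 0)"] by (simp add: conformal_factor_def)
  have "S2_cart \<rho> \<xi> (polar_to_cart r \<phi> Pr Pphi)
      = ((Pr * cos \<phi> - ?q * sin \<phi>)^2 - (Pr * sin \<phi> + ?q * cos \<phi>)^2) / 2
        + ((r * cos \<phi> - 0 * sin \<phi>)^2 - (r * sin \<phi> + 0 * cos \<phi>)^2)
          * (\<xi> - \<rho> * ((Pr * cos \<phi> - ?q * sin \<phi>)^2 + (Pr * sin \<phi> + ?q * cos \<phi>)^2))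
          / (2 * (1 + \<rho> * ((r * cos \<phi> - 0 * sin \<phi>)^2 + (r * sin \<phi> + 0 * cos \<phi>)^2)))"
    by (simp add: S2_cart_def conformal_factor_def polar_to_cart_def)
  also have "\<dots> = ((Pr^2 - ?q^2) * cos (2 * \<phi>) - 2 * Pr * ?q * sin (2 * \<phi>)) / 2
        + r^2 * cos (2 * \<phi>) * (\<xi> - \<rho> * (Pr^2 + ?q^2)) / (2 * ?D)"
    unfolding rotation_diff_squares rotation_sum_squares by simp
  also have "\<dots> = - sin (2 * \<phi>) * Pr * ?q
      + cos (2 * \<phi>) * ((Pr^2 - ?q^2 + r^2 * (\<xi> - \<rho> * (Pr^2 + ?q^2)) / ?D) / 2)"
    using \<open>?D \<noteq> 0\<close> by (simp add: field_simps)
  also have "\<dots> = S2 \<rho> \<xi> r \<phi> Pr Pphi"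
    unfolding S2_def H0_minus_angular_term[OF \<open>?D \<noteq> 0\<close>] by simp
  finally show ?thesis .
qed

lemma smooth_on_S2_cart: "\<rho> \<ge> 0 \<Longrightarrow> smooth_on UNIV (S2_cart \<rho> \<xi>)"
  unfolding S2_cart_def split_def prod.collapse
  by (intro smooth_on_add smooth_on_diff smooth_on_mult smooth_on_divide smooth_on_power
      smooth_on_const smooth_on_phase_space_coordinates smooth_on_conformal_factor_fst open_UNIV)
    (simp_all add: conformal_factor_nonzero)

lemma global_extension_S2: "\<rho> \<ge> 0 \<Longrightarrow> global_extension (S2_cart \<rho> \<xi>) (S2 \<rho> \<xi>)"
  by (simp add: global_extension_def smooth_on_S2_cart S2_cart_polar_to_cart)

theorem theorem7:
  fixes \<rho> \<xi> :: real
  assumes "\<rho> > 0"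
  shows
    \<comment> \<open>the metric extends to a smooth Riemannian metric g11 dx1^2 + 2 g12 dx1 dx2 + g22 dx2^2 on R^2\<close>
    "(\<exists>g11 g12 g22 :: real \<times> real \<Rightarrow> real.
        smooth_on UNIV g11 \<and> smooth_on UNIV g12 \<and> smooth_on UNIV g22 \<and>
        (\<forall>x. g11 x > 0 \<and> g11 x * g22 x - (g12 x)^2 > 0) \<and>
        (\<forall>r \<phi> a b. r > 0 \<longrightarrow>
           (let x = (r * cos \<phi>, r * sin \<phi>);
                u1 = a * cos \<phi> - r * b * sin \<phi>;
                u2 = a * sin \<phi> + r * b * cos \<phi>
            in g11 x * u1^2 + 2 * g12 x * u1 * u2 + g22 x * u2^2
               = (1 + \<rho> * r^2) * (a^2 + r^2 * b^2)))) \<and>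
     (\<exists>F. global_extension F (H0 \<rho> \<xi>)) \<and>
     (\<exists>F. global_extension F Pphi_fun) \<and>
     (\<exists>F. global_extension F (S1 \<rho> \<xi>)) \<and>
     (\<exists>F. global_extension F (S2 \<rho> \<xi>))"
proof -
  from assms have "\<rho> \<ge> 0"
    by simp
  then show ?thesis
    using smooth_on_conformal_factor smooth_on_const conformal_factor_pos conformal_factor_polar_pullback
      global_extension_H0[OF \<open>\<rho> \<ge> 0\<close>] global_extension_Pphi
      global_extension_S1[OF \<open>\<rho> \<ge> 0\<close>] global_extension_S2[OF \<open>\<rho> \<ge> 0\<close>]
    by (intro conjI exI[of _ "conformal_factor \<rho>", OF exI[of _ "\<lambda>_. 0", OF exI[of _ "conformal_factor \<rho>"]]])
      (blast | simp add: Let_def)+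
qed

end
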